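(* Consider a fully-connected neural network whose first hidden layer has weights $w^1_{ij}$ (input feature $i\in\{1,\dots,m\}$, neuron $j$) and biases $b^1_j$, so that neuron $j$ has pre-activation $\sum_{i=1}^m x^i w^1_{ij}+b^1_j$, and whose output depends on the parameters and the input only through the network function; the likelihood of a dataset $D=\{(x_k,y_k)\}_{k=1}^n$ is $p(D\mid W)=\prod_k \ell(y_k,f(x_k,W))$ and the posterior is $p(W\mid D)\propto p(D\mid W)p(W)$. Suppose the prior over the first-layer weights $w^1_{ij}$ and biases $b^1_j$ is i.i.d. $\mathcal{N}(0,\alpha^2)$ and independent of the other parameters. Suppose all training inputs lie in an affine subspace: $\sum_{j=1}^m x_k^j c_j=c_0$ for all $k=1,\dots,n$, for constants $c_0,\dots,c_m$ with $\sum_{i=0}^m c_i^2=1$. Then: (1) for every first-layer neuron $j$, the posterior distribution of $w^c_j=\sum_{i=1}^m c_i w^1_{ij}-c_0 b^1_j$ (the projection of $(w^1_{1j},\dots,w^1_{mj},b^1_j)$ on the direction $(c_1,\dots,c_m,-c_0)$) coincides with the prior $\mathcal{N}(0,\alpha^2)$; (2) the MAP solution sets $w^c_j$ to zero.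
   Context: A MAP solution is a maximizer of the posterior density $p(W\mid D)$. *)

theory Defs
  imports "HOL-Probability.Probability"
begin

text \<open>Parameters of the network: first-layer weights w (row j = incoming weights of
 neuron j, entry i = input feature i), first-layer biases b, and all remaining
 parameters theta (living in some Euclidean space).\<close>
type_synonym ('m, 'h, 'p) params = "((real^'m^'h) \<times> (real^'h)) \<times> 'p"

definition preact :: "real^'m \<Rightarrow> real^'m^'h \<Rightarrow> real^'h \<Rightarrow> real^'h" where
  "preact x w b = (\<chi> j. (\<Sum>i\<in>UNIV. x$i * w$j$i) + b$j)"

text \<open>Fully connected network: the output depends on the first layer only through
 the pre-activations of the first hidden layer; F is the rest of the network.\<close>
definition net :: "(real^'h \<Rightarrow> 'p \<Rightarrow> 'o) \<Rightarrow> real^'m \<Rightarrow> ('m,'h,'p) params \<Rightarrow> 'o" where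
  "net F x W = (case W of ((w, b), \<theta>) \<Rightarrow> F (preact x w b) \<theta>)"

definition likelihood ::
  "('y \<Rightarrow> 'o \<Rightarrow> real) \<Rightarrow> (real^'h \<Rightarrow> 'p \<Rightarrow> 'o) \<Rightarrow> nat \<Rightarrow> (nat \<Rightarrow> real^'m) \<Rightarrow> (nat \<Rightarrow> 'y)
    \<Rightarrow> ('m,'h,'p) params \<Rightarrow> real" where
  "likelihood L F n xs ys W = (\<Prod>k<n. L (ys k) (net F (xs k) W))"

definition prior :: "real \<Rightarrow> ('p \<Rightarrow> real) \<Rightarrow> ('m::finite,'h::finite,'p) params \<Rightarrow> real" where
  "prior \<alpha> q W = (case W of ((w, b), \<theta>) \<Rightarrow>
     (\<Prod>j\<in>UNIV. (\<Prod>i\<in>UNIV. normal_density 0 \<alpha> (w$j$i)) * normal_density 0 \<alpha> (b$j)) * q \<theta>)"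

definition evidence ::
  "('y \<Rightarrow> 'o \<Rightarrow> real) \<Rightarrow> (real^'h \<Rightarrow> 'p \<Rightarrow> 'o) \<Rightarrow> nat \<Rightarrow> (nat \<Rightarrow> real^'m) \<Rightarrow> (nat \<Rightarrow> 'y)
    \<Rightarrow> real \<Rightarrow> ('p::euclidean_space \<Rightarrow> real) \<Rightarrow> ennreal" where
  "evidence L F n xs ys \<alpha> q =
     (\<integral>\<^sup>+ W. ennreal (likelihood L F n xs ys W * prior \<alpha> q W) \<partial>(lborel :: ('m::finite,'h::finite,'p) params measure))"

definition post_density ::
  "('y \<Rightarrow> 'o \<Rightarrow> real) \<Rightarrow> (real^'h \<Rightarrow> 'p \<Rightarrow> 'o) \<Rightarrow> nat \<Rightarrow> (nat \<Rightarrow> real^'m) \<Rightarrow> (nat \<Rightarrow> 'y)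
    \<Rightarrow> real \<Rightarrow> ('p::euclidean_space \<Rightarrow> real) \<Rightarrow> ('m::finite,'h::finite,'p) params \<Rightarrow> real" where
  "post_density L F n xs ys \<alpha> q W =
     likelihood L F n xs ys W * prior \<alpha> q W / enn2real (evidence L F n xs ys \<alpha> q)"

definition posterior ::
  "('y \<Rightarrow> 'o \<Rightarrow> real) \<Rightarrow> (real^'h \<Rightarrow> 'p \<Rightarrow> 'o) \<Rightarrow> nat \<Rightarrow> (nat \<Rightarrow> real^'m) \<Rightarrow> (nat \<Rightarrow> 'y)
    \<Rightarrow> real \<Rightarrow> ('p::euclidean_space \<Rightarrow> real) \<Rightarrow> ('m::finite,'h::finite,'p) params measure" where
  "posterior L F n xs ys \<alpha> q =
     density lborel (\<lambda>W. ennreal (post_density L F n xs ys \<alpha> q W))"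

definition wc :: "real^'m::finite \<Rightarrow> real \<Rightarrow> 'h::finite \<Rightarrow> ('m,'h,'p) params \<Rightarrow> real" where
  "wc c c0 j W = (case W of ((w, b), \<theta>) \<Rightarrow> (\<Sum>i\<in>UNIV. c$i * w$j$i) - c0 * b$j)"

end

theory Submission
  imports Defs
begin

(* Moving the incoming weights and bias of neuron j along the unit vector (c, -c0) leaves
   every pre-activation on the training inputs unchanged, since they satisfy <x_k, c> = c0;
   so the likelihood is constant along this line. Because the prior on the row is an
   isotropic Gaussian, it factors as N(0, alpha^2) evaluated at the coordinate w^c_j along
   the line times a factor constant along it. Hence the unnormalised posterior is
   N(0, alpha^2)(w^c_j) times a function constant along the line: by Fubini the law of
   w^c_j is N(0, alpha^2), and sliding a maximiser to w^c_j = 0 would strictly increase it. *)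

lemma nn_integral_lborel_translate:
  fixes f :: "'a::euclidean_space \<Rightarrow> ennreal"
  assumes [measurable]: "f \<in> borel_measurable borel"
  shows "(\<integral>\<^sup>+x. f (a + x) \<partial>lborel) = (\<integral>\<^sup>+x. f x \<partial>lborel)"
  by (subst (2) lborel_distr_plus[of a, symmetric]) (simp add: nn_integral_distr)

lemma nn_integral_lborel_reflect:
  fixes f :: "real \<Rightarrow> ennreal"
  assumes [measurable]: "f \<in> borel_measurable borel"
  shows "(\<integral>\<^sup>+t. f (a - t) \<partial>lborel) = (\<integral>\<^sup>+t. f t \<partial>lborel)"
  using nn_integral_real_affine[of f "-1" a] by simp

text \<open>Insert \<open>\<integral> k = 1\<close>, swap the integrals and translate along \<open>V\<close>: this moves \<open>s x\<close> from
  \<open>k\<close> into the argument of \<open>g\<close>, which then integrates to \<open>\<integral> g\<close>.\<close>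
lemma nn_integral_factor_along_line:
  fixes s :: "'a::euclidean_space \<Rightarrow> real" and G :: "'a \<Rightarrow> ennreal" and g k :: "real \<Rightarrow> ennreal"
  assumes [measurable]: "s \<in> borel_measurable borel" "G \<in> borel_measurable borel"
      "g \<in> borel_measurable borel" "k \<in> borel_measurable borel"
    and s_shift: "\<And>x t. s (t *\<^sub>R V + x) = t + s x"
    and G_shift: "\<And>x t. G (t *\<^sub>R V + x) = G x"
    and k_prob: "(\<integral>\<^sup>+t. k t \<partial>lborel) = 1"
  shows "(\<integral>\<^sup>+x. g (s x) * G x \<partial>lborel)
       = (\<integral>\<^sup>+t. g t \<partial>lborel) * (\<integral>\<^sup>+x. k (s x) * G x \<partial>lborel)"
proof -
  have "(\<integral>\<^sup>+x. g (s x) * G x \<partial>lborel)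
      = (\<integral>\<^sup>+x. (\<integral>\<^sup>+t. g (s x) * G x * k (s x + t) \<partial>lborel) \<partial>lborel)"
    by (simp add: nn_integral_cmult nn_integral_lborel_translate k_prob)
  also have "\<dots> = (\<integral>\<^sup>+t. (\<integral>\<^sup>+x. g (s x) * G x * k (s x + t) \<partial>lborel) \<partial>lborel)"
    by (subst lborel_pair.Fubini') (auto simp: case_prod_unfold cong: measurable_cong_sets)
  also have "\<dots> = (\<integral>\<^sup>+t. (\<integral>\<^sup>+x. g (s x - t) * G x * k (s x) \<partial>lborel) \<partial>lborel)"
  proof (rule nn_integral_cong)
    fix t
    have "(\<integral>\<^sup>+x. g (s x) * G x * k (s x + t) \<partial>lborel)
        = (\<integral>\<^sup>+x. g (s ((- t) *\<^sub>R V + x)) * G ((- t) *\<^sub>R V + x) * k (s ((- t) *\<^sub>R V + x) + t) \<partial>lborel)"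
      by (rule nn_integral_lborel_translate[symmetric]) measurable
    then show "(\<integral>\<^sup>+x. g (s x) * G x * k (s x + t) \<partial>lborel)
        = (\<integral>\<^sup>+x. g (s x - t) * G x * k (s x) \<partial>lborel)"
      unfolding s_shift G_shift by simp
  qed
  also have "\<dots> = (\<integral>\<^sup>+x. (\<integral>\<^sup>+t. g (s x - t) * (k (s x) * G x) \<partial>lborel) \<partial>lborel)"
    by (subst lborel_pair.Fubini') (auto simp: case_prod_unfold mult_ac cong: measurable_cong_sets)
  also have "\<dots> = (\<integral>\<^sup>+x. (\<integral>\<^sup>+t. g (s x - t) \<partial>lborel) * (k (s x) * G x) \<partial>lborel)"
    by (simp add: nn_integral_multc)
  also have "\<dots> = (\<integral>\<^sup>+t. g t \<partial>lborel) * (\<integral>\<^sup>+x. k (s x) * G x \<partial>lborel)"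
    by (simp add: nn_integral_lborel_reflect nn_integral_cmult)
  finally show ?thesis .
qed

text \<open>The hypotheses make \<open>f / (h \<circ> s)\<close> constant along \<open>V\<close>, so the factorisation above
  shows that the law of \<open>s\<close> under the normalised \<open>f\<close> is \<open>h\<close>.\<close>
lemma distr_density_equivariant_coordinate:
  fixes f :: "'a::euclidean_space \<Rightarrow> real" and s :: "'a \<Rightarrow> real" and h :: "real \<Rightarrow> real"
  assumes [measurable]: "f \<in> borel_measurable borel" "s \<in> borel_measurable borel"
      "h \<in> borel_measurable borel"
    and f_nonneg: "\<And>x. 0 \<le> f x" and h_pos: "\<And>t. 0 < h t"
    and h_prob: "(\<integral>\<^sup>+t. ennreal (h t) \<partial>lborel) = 1"
    and f_int: "(\<integral>\<^sup>+x. ennreal (f x) \<partial>lborel) = ennreal Z" and Z_pos: "0 < Z"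
    and s_shift: "\<And>x t. s (t *\<^sub>R V + x) = t + s x"
    and f_shift: "\<And>x t. f (t *\<^sub>R V + x) * h (s x) = f x * h (t + s x)"
  shows "distr (density lborel (\<lambda>x. ennreal (f x / Z))) lborel s = density lborel (\<lambda>t. ennreal (h t))"
proof (rule measure_eqI)
  define G where "G x = ennreal (f x / (h (s x) * Z))" for x
  have [measurable]: "G \<in> borel_measurable borel"
    unfolding G_def by measurable
  have f_eq: "ennreal (f x / Z) = ennreal (h (s x)) * G x" for x
    unfolding G_def using h_pos[of "s x"] Z_pos f_nonneg[of x]
    by (simp add: ennreal_mult[symmetric] field_simps)
  have G_shift: "G (t *\<^sub>R V + x) = G x" for t x
  proof -
    have "f (t *\<^sub>R V + x) = f x * h (t + s x) / h (s x)"
      using f_shift[of t x] h_pos[of "s x"] by (simp add: eq_divide_eq)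
    then show ?thesis
      using h_pos[of "s x"] h_pos[of "t + s x"] by (simp add: G_def s_shift)
  qed
  have G_int: "(\<integral>\<^sup>+x. ennreal (h (s x)) * G x \<partial>lborel) = 1"
  proof -
    have "(\<integral>\<^sup>+x. ennreal (h (s x)) * G x \<partial>lborel) = (\<integral>\<^sup>+x. ennreal (f x) * ennreal (1 / Z) \<partial>lborel)"
      using Z_pos f_nonneg by (simp add: f_eq[symmetric] ennreal_mult[symmetric])
    also have "\<dots> = 1"
      using Z_pos by (simp add: nn_integral_multc f_int ennreal_mult[symmetric])
    finally show ?thesis .
  qed
  fix A assume "A \<in> sets (distr (density lborel (\<lambda>x. ennreal (f x / Z))) lborel s)"
  then have [measurable]: "A \<in> sets borel" by simp
  have preimage: "s -` A \<in> sets lborel"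
    using measurable_sets_borel[of s borel A] by simp
  have "emeasure (distr (density lborel (\<lambda>x. ennreal (f x / Z))) lborel s) A
      = (\<integral>\<^sup>+x. (indicator A (s x) * ennreal (h (s x))) * G x \<partial>lborel)"
    using preimage
    by (simp add: emeasure_distr emeasure_density f_eq mult_ac indicator_vimage[symmetric]
        cong: measurable_cong_sets)
  also have "\<dots> = (\<integral>\<^sup>+t. indicator A t * ennreal (h t) \<partial>lborel)"
    by (subst nn_integral_factor_along_line[where g="\<lambda>t. indicator A t * ennreal (h t)",
          OF _ _ _ _ s_shift G_shift h_prob]) (simp_all add: G_int)
  finally show "emeasure (distr (density lborel (\<lambda>x. ennreal (f x / Z))) lborel s) A
      = emeasure (density lborel (\<lambda>t. ennreal (h t))) A"
    by (simp add: emeasure_density mult.commute)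
qed simp

lemma maximiser_equivariant_coordinate_eq_0:
  fixes f :: "'a::real_vector \<Rightarrow> real" and s :: "'a \<Rightarrow> real" and h :: "real \<Rightarrow> real"
  assumes h_pos: "\<And>t. 0 < h t" and h_peak: "\<And>t. t \<noteq> 0 \<Longrightarrow> h t < h 0"
    and f_shift: "\<And>x t. f (t *\<^sub>R V + x) * h (s x) = f x * h (t + s x)"
    and max: "\<And>x. f x \<le> f xm" and f_pos: "\<exists>x. 0 < f x"
  shows "s xm = 0"
proof (rule ccontr)
  have pos: "0 < f xm"
    using f_pos max by (meson less_le_trans)
  assume "s xm \<noteq> 0"
  then have "f xm * h (s xm) < f xm * h 0"
    using h_peak pos by simp
  also have "\<dots> = f ((- s xm) *\<^sub>R V + xm) * h (s xm)"
    using f_shift[of "- s xm" xm] by simp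
  finally have "f xm < f ((- s xm) *\<^sub>R V + xm)"
    using h_pos[of "s xm"] by simp
  with max show False
    by (meson not_le)
qed

lemma nn_integral_normal_density:
  assumes "0 < \<sigma>"
  shows "(\<integral>\<^sup>+x. ennreal (normal_density \<mu> \<sigma> x) \<partial>lborel) = 1"
  using prob_space.emeasure_space_1[OF prob_space_normal_density] assms
  by (simp add: emeasure_density)

lemma normal_density_less_mean:
  assumes "0 < \<sigma>" "x \<noteq> \<mu>"
  shows "normal_density \<mu> \<sigma> x < normal_density \<mu> \<sigma> \<mu>"
proof -
  have "exp (- ((x - \<mu>)\<^sup>2 / (2 * \<sigma>\<^sup>2))) < 1"
    using assms by simp
  then show ?thesis
    using assms by (simp add: normal_density_def divide_strict_right_mono)
qed

lemma prod_normal_density: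
  assumes "finite I"
  shows "(\<Prod>i\<in>I. normal_density 0 \<sigma> (y i))
       = (1 / sqrt (2 * pi * \<sigma>\<^sup>2)) ^ card I * exp (- (\<Sum>i\<in>I. (y i)\<^sup>2) / (2 * \<sigma>\<^sup>2))"
proof -
  have "(\<Prod>i\<in>I. normal_density 0 \<sigma> (y i))
      = (\<Prod>i\<in>I. 1 / sqrt (2 * pi * \<sigma>\<^sup>2) * exp (- (y i)\<^sup>2 / (2 * \<sigma>\<^sup>2)))"
    by (simp add: normal_density_def)
  also have "\<dots> = (1 / sqrt (2 * pi * \<sigma>\<^sup>2)) ^ card I * exp (\<Sum>i\<in>I. - (y i)\<^sup>2 / (2 * \<sigma>\<^sup>2))"
    by (simp only: prod.distrib prod_constant exp_sum[OF assms])
  finally show ?thesis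
    by (simp add: sum_negf sum_divide_distrib)
qed

lemma normal_density_row_translate:
  fixes w c :: "real^'m::finite" and b c0 t :: real
  assumes unit: "c0\<^sup>2 + (\<Sum>i\<in>UNIV. (c$i)\<^sup>2) = 1"
  defines "s \<equiv> (\<Sum>i\<in>UNIV. c$i * w$i) - c0 * b"
  shows "(\<Prod>i\<in>UNIV. normal_density 0 \<sigma> (w$i + t * c$i)) * normal_density 0 \<sigma> (b - t * c0)
           * normal_density 0 \<sigma> s
       = (\<Prod>i\<in>UNIV. normal_density 0 \<sigma> (w$i)) * normal_density 0 \<sigma> b * normal_density 0 \<sigma> (t + s)"
proof -
  define K D where "K = 1 / sqrt (2 * pi * \<sigma>\<^sup>2)" and "D = 2 * \<sigma>\<^sup>2"
  have gauss: "(\<Prod>i\<in>UNIV. normal_density 0 \<sigma> (y$i)) * normal_density 0 \<sigma> u * normal_density 0 \<sigma> v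
      = K ^ (CARD('m) + 2) * exp (- ((\<Sum>i\<in>UNIV. (y$i)\<^sup>2) + u\<^sup>2 + v\<^sup>2) / D)" for y :: "real^'m" and u v
  proof -
    have "(\<Prod>i\<in>UNIV. normal_density 0 \<sigma> (y$i)) * normal_density 0 \<sigma> u * normal_density 0 \<sigma> v
        = K ^ CARD('m) * exp (- (\<Sum>i\<in>UNIV. (y$i)\<^sup>2) / D) * (K * exp (- u\<^sup>2 / D))
            * (K * exp (- v\<^sup>2 / D))"
      unfolding K_def D_def prod_normal_density[OF finite_class.finite_UNIV] by (simp add: normal_density_def)
    also have "\<dots> = K ^ (CARD('m) + 2) * (exp (- (\<Sum>i\<in>UNIV. (y$i)\<^sup>2) / D) * exp (- u\<^sup>2 / D)
            * exp (- v\<^sup>2 / D))"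
      by (simp add: power_add power2_eq_square mult_ac)
    also have "exp (- (\<Sum>i\<in>UNIV. (y$i)\<^sup>2) / D) * exp (- u\<^sup>2 / D) * exp (- v\<^sup>2 / D)
        = exp (- ((\<Sum>i\<in>UNIV. (y$i)\<^sup>2) + u\<^sup>2 + v\<^sup>2) / D)"
      by (simp add: exp_add[symmetric] add_divide_distrib diff_divide_distrib)
    finally show ?thesis .
  qed
  have sq_c: "(\<Sum>i\<in>UNIV. (c$i)\<^sup>2) = 1 - c0\<^sup>2"
    using unit by simp
  have "(\<Sum>i\<in>UNIV. (w$i + t * c$i)\<^sup>2)
      = (\<Sum>i\<in>UNIV. (w$i)\<^sup>2) + 2 * t * (\<Sum>i\<in>UNIV. c$i * w$i) + t\<^sup>2 * (1 - c0\<^sup>2)"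
    unfolding sq_c[symmetric]
    by (simp add: power2_sum sum.distrib sum_distrib_left algebra_simps power_mult_distrib)
  then have "(\<Sum>i\<in>UNIV. (w$i + t * c$i)\<^sup>2) + (b - t * c0)\<^sup>2 + s\<^sup>2
      = (\<Sum>i\<in>UNIV. (w$i)\<^sup>2) + b\<^sup>2 + (t + s)\<^sup>2"
    unfolding s_def by (simp add: algebra_simps power2_eq_square)
  then show ?thesis
    using gauss[of "\<chi> i. w$i + t * c$i" "b - t * c0" s] gauss[of w b "t + s"] by simp
qed

definition neuron_direction :: "real^'m \<Rightarrow> real \<Rightarrow> 'h \<Rightarrow> ('m::finite,'h::finite,'p::real_vector) params" where
  "neuron_direction c c0 j = (((\<chi> j'. if j' = j then c else 0), (\<chi> j'. if j' = j then - c0 else 0)), 0)"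

lemma translate_neuron_direction:
  "t *\<^sub>R neuron_direction c c0 j + ((w, b), \<theta>)
     = (((\<chi> j'. if j' = j then w$j + t *\<^sub>R c else w$j'), (\<chi> j'. if j' = j then b$j - t * c0 else b$j')), \<theta>)"
  by (simp add: neuron_direction_def vec_eq_iff)

lemma wc_translate_neuron_direction:
  assumes "c0\<^sup>2 + (\<Sum>i\<in>UNIV. (c$i)\<^sup>2) = 1"
  shows "wc c c0 j (t *\<^sub>R neuron_direction c c0 j + W) = t + wc c c0 j W"
proof -
  obtain w b \<theta> where W: "W = ((w, b), \<theta>)"
    by (metis prod.collapse)
  have "wc c c0 j (t *\<^sub>R neuron_direction c c0 j + W) = wc c c0 j W + t * (c0\<^sup>2 + (\<Sum>i\<in>UNIV. (c$i)\<^sup>2))"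
    unfolding W translate_neuron_direction wc_def
    by (simp add: algebra_simps sum.distrib sum_distrib_left power2_eq_square)
  then show ?thesis
    using assms by simp
qed

lemma net_translate_neuron_direction:
  assumes "(\<Sum>i\<in>UNIV. x$i * c$i) = c0"
  shows "net F x (t *\<^sub>R neuron_direction c c0 j + W) = net F x W"
proof -
  obtain w b \<theta> where W: "W = ((w, b), \<theta>)"
    by (metis prod.collapse)
  have "(\<Sum>i\<in>UNIV. x$i * (w$j$i + t * c$i)) = (\<Sum>i\<in>UNIV. x$i * w$j$i) + t * (\<Sum>i\<in>UNIV. x$i * c$i)"
    by (simp add: algebra_simps sum.distrib sum_distrib_left)
  then have "preact x (\<chi> j'. if j' = j then w$j + t *\<^sub>R c else w$j') (\<chi> j'. if j' = j then b$j - t * c0 else b$j')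
      = preact x w b"
    using assms by (simp add: preact_def vec_eq_iff)
  then show ?thesis
    by (simp add: W net_def translate_neuron_direction)
qed

lemma prior_translate_neuron_direction:
  fixes c :: "real^'m::finite" and j :: "'h::finite" and W :: "('m,'h,'p::real_vector) params"
  assumes unit: "c0\<^sup>2 + (\<Sum>i\<in>UNIV. (c$i)\<^sup>2) = 1"
  shows "prior \<alpha> q (t *\<^sub>R neuron_direction c c0 j + W) * normal_density 0 \<alpha> (wc c c0 j W)
       = prior \<alpha> q W * normal_density 0 \<alpha> (t + wc c c0 j W)"
proof -
  obtain w b \<theta> where W: "W = ((w, b), \<theta>)"
    by (metis prod.collapse)
  define R where "R v a = (\<Prod>i\<in>UNIV. normal_density 0 \<alpha> (v$i)) * normal_density 0 \<alpha> a"
    for v :: "real^'m" and a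
  have prior_R: "prior \<alpha> q ((v, a), \<theta>) = R (v$j) (a$j) * (\<Prod>j'\<in>UNIV - {j}. R (v$j') (a$j')) * q \<theta>"
    for v :: "real^'m^'h" and a
    by (simp add: prior_def R_def prod.remove[OF finite_class.finite_UNIV UNIV_I, of _ j])
  have "prior \<alpha> q (t *\<^sub>R neuron_direction c c0 j + W)
      = R (w$j + t *\<^sub>R c) (b$j - t * c0) * (\<Prod>j'\<in>UNIV - {j}. R (w$j') (b$j')) * q \<theta>"
    unfolding W translate_neuron_direction prior_R by (auto intro!: prod.cong)
  then show ?thesis
    using normal_density_row_translate[OF unit, where \<sigma>=\<alpha> and w="w$j" and b="b$j" and t=t]
    by (simp add: prior_R W wc_def R_def mult_ac)
qed

lemma borel_measurable_wc:
  "wc c c0 j \<in> borel_measurable (borel :: ('m::finite,'h::finite,'p::euclidean_space) params measure)"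
proof -
  have wc_eq: "wc c c0 j
      = (\<lambda>W::('m,'h,'p) params. (\<Sum>i\<in>UNIV. c$i * fst (fst W)$j$i) - c0 * snd (fst W)$j)"
    by (auto simp: wc_def fun_eq_iff split: prod.splits)
  show ?thesis
    unfolding wc_eq by (intro borel_measurable_continuous_onI continuous_intros)
qed

lemma borel_measurable_likelihood:
  fixes F :: "real^'h::finite \<Rightarrow> 'p::euclidean_space \<Rightarrow> 'o" and xs :: "nat \<Rightarrow> real^'m::finite"
  assumes "\<And>k. k < n \<Longrightarrow> (\<lambda>(z, \<theta>). L (ys k) (F z \<theta>)) \<in> borel_measurable borel"
  shows "(likelihood L F n xs ys :: ('m,'h,'p) params \<Rightarrow> real) \<in> borel_measurable borel"
proof -
  have likelihood_eq: "likelihood L F n xs ys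
      = (\<lambda>W::('m,'h,'p) params. \<Prod>k<n. (\<lambda>(z, \<theta>). L (ys k) (F z \<theta>))
          (preact (xs k) (fst (fst W)) (snd (fst W)), snd W))"
    by (auto simp: likelihood_def net_def fun_eq_iff split: prod.splits)
  have preact_meas: "(\<lambda>W::('m,'h,'p) params. (preact (xs k) (fst (fst W)) (snd (fst W)), snd W))
      \<in> borel \<rightarrow>\<^sub>M borel" for k
    unfolding preact_def by (intro borel_measurable_continuous_onI continuous_intros)
  show ?thesis
    unfolding likelihood_eq by (intro borel_measurable_prod measurable_compose[OF preact_meas] assms) simp
qed

lemma borel_measurable_prior:
  fixes q :: "'p::euclidean_space \<Rightarrow> real"
  assumes "q \<in> borel_measurable borel"
  shows "(prior \<alpha> q :: ('m::finite,'h::finite,'p) params \<Rightarrow> real) \<in> borel_measurable borel"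
proof -
  have prior_eq: "prior \<alpha> q = (\<lambda>W::('m,'h,'p) params. (\<Prod>j\<in>UNIV. (\<Prod>i\<in>UNIV.
      normal_density 0 \<alpha> (fst (fst W)$j$i)) * normal_density 0 \<alpha> (snd (fst W)$j)) * q (snd W))"
    by (auto simp: prior_def fun_eq_iff split: prod.splits)
  have normal_comp: "(\<lambda>W. normal_density 0 \<alpha> (g W)) \<in> borel_measurable borel"
    if "continuous_on UNIV g" for g :: "('m,'h,'p) params \<Rightarrow> real"
    using measurable_compose[OF borel_measurable_continuous_onI[OF that] borel_measurable_normal_density]
    by simp
  have "(\<lambda>W::('m,'h,'p) params. q (snd W)) \<in> borel_measurable borel"
    by (rule measurable_compose[OF _ assms]) (intro borel_measurable_continuous_onI continuous_intros)
  then show ?thesis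
    unfolding prior_eq
    by (intro borel_measurable_times borel_measurable_prod normal_comp continuous_intros)
qed

definition joint_density ::
  "('y \<Rightarrow> 'o \<Rightarrow> real) \<Rightarrow> (real^'h \<Rightarrow> 'p \<Rightarrow> 'o) \<Rightarrow> nat \<Rightarrow> (nat \<Rightarrow> real^'m)
    \<Rightarrow> (nat \<Rightarrow> 'y) \<Rightarrow> real \<Rightarrow> ('p \<Rightarrow> real) \<Rightarrow> ('m::finite,'h::finite,'p) params \<Rightarrow> real" where
  "joint_density L F n xs ys \<alpha> q W = likelihood L F n xs ys W * prior \<alpha> q W"

lemma joint_density_nonneg:
  assumes "\<And>y o'. 0 \<le> L y o'" and "\<And>\<theta>. 0 \<le> q \<theta>"
  shows "0 \<le> joint_density L F n xs ys \<alpha> q W"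
  unfolding joint_density_def likelihood_def prior_def using assms
  by (auto intro!: mult_nonneg_nonneg prod_nonneg split: prod.splits)

lemma borel_measurable_joint_density:
  fixes F :: "real^'h::finite \<Rightarrow> 'p::euclidean_space \<Rightarrow> 'o" and xs :: "nat \<Rightarrow> real^'m::finite"
  assumes "\<And>k. k < n \<Longrightarrow> (\<lambda>(z, \<theta>). L (ys k) (F z \<theta>)) \<in> borel_measurable borel"
    and "q \<in> borel_measurable borel"
  shows "(joint_density L F n xs ys \<alpha> q :: ('m,'h,'p) params \<Rightarrow> real) \<in> borel_measurable borel"
  unfolding joint_density_def[abs_def] using assms
  by (intro borel_measurable_times borel_measurable_likelihood borel_measurable_prior) auto

lemma joint_density_translate_neuron_direction:
  fixes c :: "real^'m::finite" and j :: "'h::finite" and W :: "('m,'h,'p::real_vector) params"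
  assumes "c0\<^sup>2 + (\<Sum>i\<in>UNIV. (c$i)\<^sup>2) = 1" and "\<And>k. k < n \<Longrightarrow> (\<Sum>i\<in>UNIV. xs k $ i * c $ i) = c0"
  shows "joint_density L F n xs ys \<alpha> q (t *\<^sub>R neuron_direction c c0 j + W) * normal_density 0 \<alpha> (wc c c0 j W)
       = joint_density L F n xs ys \<alpha> q W * normal_density 0 \<alpha> (t + wc c c0 j W)"
  using prior_translate_neuron_direction[OF assms(1), of \<alpha> q t j W] assms(2)
  by (simp add: joint_density_def likelihood_def net_translate_neuron_direction mult.assoc)

lemma evidence_pos_imp_joint_density_pos:
  assumes "0 < evidence L F n xs ys \<alpha> q"
  shows "\<exists>W. 0 < joint_density L F n xs ys \<alpha> q W"
proof (rule ccontr)
  assume "\<nexists>W. 0 < joint_density L F n xs ys \<alpha> q W"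
  then have "ennreal (joint_density L F n xs ys \<alpha> q W) = 0" for W
    by (metis ennreal_eq_0_iff not_less)
  then have "evidence L F n xs ys \<alpha> q = 0"
    by (simp add: evidence_def joint_density_def[symmetric])
  with assms show False
    by simp
qed

theorem proposition2:
  fixes L :: "'y \<Rightarrow> 'o \<Rightarrow> real"
    and F :: "real^'h::finite \<Rightarrow> 'p::euclidean_space \<Rightarrow> 'o"
    and n :: nat and xs :: "nat \<Rightarrow> real^'m::finite" and ys :: "nat \<Rightarrow> 'y"
    and \<alpha> :: real and q :: "'p \<Rightarrow> real"
    and c :: "real^'m" and c0 :: real
  assumes alpha_pos: "\<alpha> > 0"
    and lik_nonneg: "\<And>y o'. 0 \<le> L y o'"
    and lik_meas: "\<And>k. k < n \<Longrightarrow> (\<lambda>(z, \<theta>). L (ys k) (F z \<theta>)) \<in> borel_measurable borel"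
    and q_meas: "q \<in> borel_measurable borel"
    and q_nonneg: "\<And>\<theta>. 0 \<le> q \<theta>"
    and q_prob: "(\<integral>\<^sup>+ \<theta>. ennreal (q \<theta>) \<partial>lborel) = 1"
    and ev_pos: "0 < evidence L F n xs ys \<alpha> q"
    and ev_fin: "evidence L F n xs ys \<alpha> q < \<infinity>"
    and c_unit: "c0\<^sup>2 + (\<Sum>i\<in>UNIV. (c$i)\<^sup>2) = 1"
    and affine: "\<And>k. k < n \<Longrightarrow> (\<Sum>i\<in>UNIV. xs k $ i * c $ i) = c0"
  shows "(\<forall>j. distr (posterior L F n xs ys \<alpha> q) lborel (wc c c0 j)
                = density lborel (\<lambda>t. ennreal (normal_density 0 \<alpha> t)))
       \<and> (\<forall>Wmap :: ('m,'h,'p) params.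
            (\<forall>W. post_density L F n xs ys \<alpha> q W \<le> post_density L F n xs ys \<alpha> q Wmap)
            \<longrightarrow> (\<forall>j. wc c c0 j Wmap = 0))"
proof -
  define f :: "('m,'h,'p) params \<Rightarrow> real" where "f = joint_density L F n xs ys \<alpha> q"
  define Z where "Z = enn2real (evidence L F n xs ys \<alpha> q)"
  have f_meas: "f \<in> borel_measurable borel"
    unfolding f_def using lik_meas q_meas by (rule borel_measurable_joint_density)
  have f_int: "(\<integral>\<^sup>+W. ennreal (f W) \<partial>lborel) = ennreal Z"
    using ev_fin by (simp add: Z_def f_def evidence_def joint_density_def)
  have Z_pos: "0 < Z"
    using ev_pos ev_fin by (simp add: Z_def enn2real_positive_iff)
  have post: "post_density L F n xs ys \<alpha> q = (\<lambda>W. f W / Z)"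
    by (simp add: post_density_def f_def Z_def joint_density_def fun_eq_iff)
  have f_shift: "f (t *\<^sub>R neuron_direction c c0 j + W) * normal_density 0 \<alpha> (wc c c0 j W)
      = f W * normal_density 0 \<alpha> (t + wc c c0 j W)" for t j W
    unfolding f_def using c_unit affine by (rule joint_density_translate_neuron_direction)
  show ?thesis
  proof (intro conjI allI impI)
    fix j
    show "distr (posterior L F n xs ys \<alpha> q) lborel (wc c c0 j)
        = density lborel (\<lambda>t. ennreal (normal_density 0 \<alpha> t))"
      unfolding posterior_def post
      by (rule distr_density_equivariant_coordinate[OF f_meas borel_measurable_wc _ _ _ _ f_int Z_pos
            wc_translate_neuron_direction[OF c_unit] f_shift])
         (simp_all add: f_def joint_density_nonneg lik_nonneg q_nonneg alpha_pos normal_density_pos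
            nn_integral_normal_density)
  next
    fix Wmap :: "('m,'h,'p) params" and j
    assume max: "\<forall>W. post_density L F n xs ys \<alpha> q W \<le> post_density L F n xs ys \<alpha> q Wmap"
    have "f W \<le> f Wmap" for W
      using max[rule_format, of W] Z_pos by (simp add: post divide_le_cancel)
    then show "wc c c0 j Wmap = 0"
      using maximiser_equivariant_coordinate_eq_0[of "normal_density 0 \<alpha>", OF _ _ f_shift]
        evidence_pos_imp_joint_density_pos[OF ev_pos]
      by (simp add: f_def alpha_pos normal_density_pos normal_density_less_mean)
  qed
qed

end
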